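(* Let $e:\mathbb{R}^n\to\mathbb{R}^n$ and $f:\mathbb{R}^n\times\mathbb{R}^m\to\mathbb{R}^n$ be continuously differentiable and consider the implicit model $e(x_{t+1})=f(x_t,u_t)$. Suppose there exists $\epsilon>0$ with $E(x)+E(x)^\top\succ\epsilon I$ for all $x$, that $F(x,u)\ge 0$, $K(x,u)\ge 0$ and $E(x)\in\mathbb{M}^n$ for all $(x,u)$, and that $e(0)=f(0,0)$. Then the model is positive.
   Context: Consider discrete-time implicit models $e(x_{t+1})=f(x_t,u_t)$, $t=0,1,2,\dots$, with state $x_t\in\mathbb{R}^n$ and input $u_t\in\mathbb{R}^m$, where $e$ and $f$ are continuously differentiable. Write $E=\partial e/\partial x$, $F=\partial f/\partial x$, $K=\partial f/\partial u$. The model is well-posed if for every $(x_t,u_t)$ there is a unique $x_{t+1}$ satisfying the model equation. The model is positive if for all inputs with $u_t\ge0$ for all $t$ and all initial conditions $x_0\ge 0$, the resulting trajectory satisfies $x_t\ge0$ for all $t$. Inequalities between vectors/matrices are elementwise; $M\succ0$ means positive definite. $\mathbb{M}^n$ denotes the set of $n\times n$ nonsingular M-matrices: real matrices with all off-diagonal entries $\le 0$ and all eigenvalues having positive real part. *)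

theory Defs
  imports "HOL-Analysis.Analysis"
begin

definition pos_def_mat :: "real^'n^'n \<Rightarrow> bool" where
  "pos_def_mat M \<longleftrightarrow> (\<forall>v. v \<noteq> 0 \<longrightarrow> v \<bullet> (M *v v) > 0)"

definition cmat :: "real^'n^'m \<Rightarrow> complex^'n^'m" where
  "cmat M = (\<chi> i j. complex_of_real (M $ i $ j))"

definition nonsing_M_matrix :: "real^'n^'n \<Rightarrow> bool" where
  "nonsing_M_matrix M \<longleftrightarrow>
     (\<forall>i j. i \<noteq> j \<longrightarrow> M $ i $ j \<le> 0) \<and>
     (\<forall>(lam::complex) (v::complex^'n). v \<noteq> 0 \<and> cmat M *v v = lam *s v \<longrightarrow> Re lam > 0)"

definition positive_model ::
  "(real^'n \<Rightarrow> real^'n) \<Rightarrow> (real^'n \<Rightarrow> real^'m \<Rightarrow> real^'n) \<Rightarrow> bool" where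
  "positive_model e f \<longleftrightarrow>
     (\<forall>(x::nat \<Rightarrow> real^'n) (u::nat \<Rightarrow> real^'m).
        (\<forall>t. u t \<ge> 0) \<longrightarrow> x 0 \<ge> 0 \<longrightarrow>
        (\<forall>t. e (x (Suc t)) = f (x t) (u t)) \<longrightarrow> (\<forall>t. x t \<ge> 0))"

end

theory Submission
  imports Defs
begin

text \<open>The map \<open>e\<close> is strictly monotone (its symmetrised Jacobian is positive definite) and
  off-diagonally antitone (its Jacobian has nonpositive off-diagonal entries). Together these
  make \<open>e\<close> inverse isotone: if \<open>e q \<le> e p\<close>, put \<open>v = min p q\<close>; every coordinate where \<open>v\<close>
  differs from \<open>q\<close> contributes a nonpositive term to \<open>(e v - e q) \<bullet> (v - q)\<close>, so strict
  monotonicity forces \<open>v = q\<close>, i.e. \<open>q \<le> p\<close>. The map \<open>f\<close> is isotone because its Jacobians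
  are nonnegative. Hence \<open>e (x (t+1)) = f (x t) (u t) \<ge> f 0 0 = e 0\<close> gives \<open>x (t+1) \<ge> 0\<close>
  by induction.\<close>

lemma has_real_derivative_along_line:
  fixes G :: "'a::real_normed_vector \<Rightarrow> 'b::real_normed_vector"
  assumes G: "(G has_derivative G') (at (a + t *\<^sub>R d))" and l: "bounded_linear l"
  shows "((\<lambda>s. l (G (a + s *\<^sub>R d))) has_real_derivative l (G' d)) (at t)"
proof -
  have "((\<lambda>s. a + s *\<^sub>R d) has_derivative (\<lambda>h. h *\<^sub>R d)) (at t)"
    by (auto intro!: derivative_eq_intros)
  from bounded_linear.has_derivative[OF l has_derivative_compose[OF this G]]
  have "((\<lambda>s. l (G (a + s *\<^sub>R d))) has_derivative (\<lambda>h. l (G' (h *\<^sub>R d)))) (at t)" .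
  moreover have "(\<lambda>h. l (G' (h *\<^sub>R d))) = (\<lambda>h. l (G' d) * h)"
    using has_derivative_bounded_linear[OF G] l
    by (auto simp: linear_simps bounded_linear.linear)
  ultimately show ?thesis by (simp add: has_field_derivative_def)
qed

lemma matrix_vector_mult_nonneg:
  fixes M :: "real^'k^'n" and v :: "real^'k"
  assumes "M \<ge> 0" and "v \<ge> 0"
  shows "M *v v \<ge> 0"
  using assms unfolding matrix_vector_mult_def
  by (auto simp: less_eq_vec_def intro!: sum_nonneg mult_nonneg_nonneg)

lemma quadratic_form_pos_if_pos_def_sym_part:
  fixes M :: "real^'n^'n"
  assumes "\<epsilon> \<ge> 0" and pd: "pos_def_mat (M + transpose M - \<epsilon> *\<^sub>R mat 1)" and "d \<noteq> 0"
  shows "(M *v d) \<bullet> d > 0"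
proof -
  have "d \<bullet> (d v* M) = d \<bullet> (M *v d)" by (metis dot_lmul_matrix inner_commute)
  then have "d \<bullet> ((M + transpose M - \<epsilon> *\<^sub>R mat 1) *v d) = 2 * ((M *v d) \<bullet> d) - \<epsilon> * (d \<bullet> d)"
    by (simp add: matrix_vector_mult_add_rdistrib matrix_vector_mult_diff_rdistrib
        transpose_matrix_vector inner_add_right inner_diff_right dot_lmul_matrix inner_commute
        scaleR_matrix_vector_assoc[symmetric])
  moreover have "d \<bullet> ((M + transpose M - \<epsilon> *\<^sub>R mat 1) *v d) > 0"
    using pd \<open>d \<noteq> 0\<close> unfolding pos_def_mat_def by blast
  ultimately show ?thesis
    using \<open>\<epsilon> \<ge> 0\<close> by (smt (verit) inner_ge_zero mult_nonneg_nonneg)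
qed

lemma strictly_monotone_if_quadratic_form_pos:
  fixes e :: "real^'n \<Rightarrow> real^'n" and E :: "real^'n \<Rightarrow> real^'n^'n"
  assumes e_deriv: "\<And>x. (e has_derivative (\<lambda>h. E x *v h)) (at x)"
    and E_pos: "\<And>x d. d \<noteq> 0 \<Longrightarrow> (E x *v d) \<bullet> d > 0"
    and "v \<noteq> q"
  shows "(e v - e q) \<bullet> (v - q) > 0"
proof -
  define d where "d = v - q"
  have "d \<noteq> 0" using \<open>v \<noteq> q\<close> by (simp add: d_def)
  have "e (q + 0 *\<^sub>R d) \<bullet> d < e (q + 1 *\<^sub>R d) \<bullet> d"
  proof (rule DERIV_pos_imp_increasing[where f="\<lambda>s. e (q + s *\<^sub>R d) \<bullet> d"])
    fix t :: real
    have "((\<lambda>s. e (q + s *\<^sub>R d) \<bullet> d) has_real_derivative (E (q + t *\<^sub>R d) *v d) \<bullet> d) (at t)"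
      using has_real_derivative_along_line[OF e_deriv bounded_linear_inner_left] by simp
    then show "\<exists>y. ((\<lambda>s. e (q + s *\<^sub>R d) \<bullet> d) has_real_derivative y) (at t) \<and> 0 < y"
      using E_pos[OF \<open>d \<noteq> 0\<close>] by blast
  qed simp
  then show ?thesis by (simp add: d_def inner_diff_left)
qed

lemma off_diagonally_antitone_if_off_diagonal_nonpos:
  fixes e :: "real^'n \<Rightarrow> real^'n" and E :: "real^'n \<Rightarrow> real^'n^'n"
  assumes e_deriv: "\<And>x. (e has_derivative (\<lambda>h. E x *v h)) (at x)"
    and off: "\<And>x i j. i \<noteq> j \<Longrightarrow> E x $ i $ j \<le> 0"
    and "a \<le> b" and "a $ i = b $ i"
  shows "e b $ i \<le> e a $ i"
proof -
  define d where "d = b - a"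
  have d_nonneg: "d $ j \<ge> 0" for j using \<open>a \<le> b\<close> by (simp add: d_def less_eq_vec_def)
  have "d $ i = 0" using \<open>a $ i = b $ i\<close> by (simp add: d_def)
  have "- e (a + 0 *\<^sub>R d) $ i \<le> - e (a + 1 *\<^sub>R d) $ i"
  proof (rule DERIV_nonneg_imp_nondecreasing[where f="\<lambda>s. - e (a + s *\<^sub>R d) $ i"])
    fix t :: real
    let ?E = "E (a + t *\<^sub>R d)"
    have "((\<lambda>s. - e (a + s *\<^sub>R d) $ i) has_real_derivative - (?E *v d) $ i) (at t)"
      using has_real_derivative_along_line[OF e_deriv bounded_linear_minus[OF bounded_linear_vec_nth]]
      by simp
    moreover have "?E $ i $ j * d $ j \<le> 0" for j
      using off[of i j] d_nonneg[of j] \<open>d $ i = 0\<close>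
      by (cases "i = j") (auto intro: mult_nonpos_nonneg)
    then have "(?E *v d) $ i \<le> 0"
      by (simp add: matrix_vector_mult_def sum_nonpos)
    ultimately show "\<exists>y. ((\<lambda>s. - e (a + s *\<^sub>R d) $ i) has_real_derivative y) (at t) \<and> 0 \<le> y"
      by force
  qed simp
  then show ?thesis by (simp add: d_def)
qed

lemma inverse_isotone_if_strictly_monotone_off_diagonally_antitone:
  fixes e :: "real^'n \<Rightarrow> real^'n"
  assumes strict_mono: "\<And>v q. v \<noteq> q \<Longrightarrow> (e v - e q) \<bullet> (v - q) > 0"
    and off_antitone: "\<And>a b i. a \<le> b \<Longrightarrow> a $ i = b $ i \<Longrightarrow> e b $ i \<le> e a $ i"
    and "e q \<le> e p"
  shows "q \<le> p"
proof -
  define v where "v = (\<chi> i. min (p $ i) (q $ i))"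
  have "v \<le> p" by (simp add: v_def less_eq_vec_def)
  have "(e v - e q) $ i * (v - q) $ i \<le> 0" for i
  proof (cases "p $ i < q $ i")
    case True
    then have "v $ i = p $ i" by (simp add: v_def)
    with off_antitone[OF \<open>v \<le> p\<close>] have "e p $ i \<le> e v $ i" by blast
    moreover have "e q $ i \<le> e p $ i" using \<open>e q \<le> e p\<close> by (simp add: less_eq_vec_def)
    ultimately show ?thesis
      using True \<open>v $ i = p $ i\<close> by (simp add: mult_nonneg_nonpos)
  qed (simp add: v_def)
  then have "(e v - e q) \<bullet> (v - q) \<le> 0"
    by (simp add: inner_vec_def sum_nonpos)
  with strict_mono have "v = q" by force
  with \<open>v \<le> p\<close> show ?thesis by simp
qed

lemma isotone_if_jacobians_nonneg:
  fixes f :: "real^'n \<Rightarrow> real^'m \<Rightarrow> real^'k"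
    and F :: "real^'n \<Rightarrow> real^'m \<Rightarrow> real^'n^'k"
    and K :: "real^'n \<Rightarrow> real^'m \<Rightarrow> real^'m^'k"
  assumes f_deriv: "\<And>x u. ((\<lambda>(y, w). f y w) has_derivative
                     (\<lambda>(h, k). F x u *v h + K x u *v k)) (at (x, u))"
    and F_nonneg: "\<And>x u. F x u \<ge> 0"
    and K_nonneg: "\<And>x u. K x u \<ge> 0"
    and "x \<le> x'" and "u \<le> u'"
  shows "f x u \<le> f x' u'"
proof -
  have "f x u $ i \<le> f x' u' $ i" for i
  proof -
    let ?g = "\<lambda>s. (\<lambda>(y, w). f y w) ((x, u) + s *\<^sub>R (x' - x, u' - u)) $ i"
    have "?g 0 \<le> ?g 1"
    proof (rule DERIV_nonneg_imp_nondecreasing[where f="?g"])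
      fix t :: real
      let ?p = "(x, u) + t *\<^sub>R (x' - x, u' - u)"
      let ?D = "F (fst ?p) (snd ?p) *v (x' - x) + K (fst ?p) (snd ?p) *v (u' - u)"
      have "(?g has_real_derivative ?D $ i) (at t)"
        using has_real_derivative_along_line[OF f_deriv[of "fst ?p" "snd ?p", unfolded prod.collapse]
            bounded_linear_vec_nth[of i]]
        by simp
      moreover have "?D \<ge> 0"
        using matrix_vector_mult_nonneg[OF F_nonneg] matrix_vector_mult_nonneg[OF K_nonneg]
          \<open>x \<le> x'\<close> \<open>u \<le> u'\<close> by simp
      ultimately show "\<exists>y. (?g has_real_derivative y) (at t) \<and> 0 \<le> y"
        by (force simp: less_eq_vec_def)
    qed simp
    then show ?thesis by simp
  qed
  then show ?thesis by (simp add: less_eq_vec_def)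
qed

lemma positive_model_if_isotone:
  fixes e :: "real^'n \<Rightarrow> real^'n" and f :: "real^'n \<Rightarrow> real^'m \<Rightarrow> real^'n"
  assumes e_inv_iso: "\<And>p q. e q \<le> e p \<Longrightarrow> q \<le> p"
    and f_iso: "\<And>x u. x \<ge> 0 \<Longrightarrow> u \<ge> 0 \<Longrightarrow> f 0 0 \<le> f x u"
    and "e 0 = f 0 0"
  shows "positive_model e f"
  unfolding positive_model_def
proof (intro allI impI)
  fix x :: "nat \<Rightarrow> real^'n" and u :: "nat \<Rightarrow> real^'m" and t
  assume "\<forall>t. u t \<ge> 0" "x 0 \<ge> 0" and step: "\<forall>t. e (x (Suc t)) = f (x t) (u t)"
  show "x t \<ge> 0"
  proof (induction t)
    case (Suc t)
    with f_iso \<open>\<forall>t. u t \<ge> 0\<close> step \<open>e 0 = f 0 0\<close> have "e 0 \<le> e (x (Suc t))" by simp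
    then show ?case by (rule e_inv_iso)
  qed (use \<open>x 0 \<ge> 0\<close> in simp)
qed

theorem theorem1:
  fixes e :: "real^'n \<Rightarrow> real^'n"
    and f :: "real^'n \<Rightarrow> real^'m \<Rightarrow> real^'n"
    and E :: "real^'n \<Rightarrow> real^'n^'n"
    and F :: "real^'n \<Rightarrow> real^'m \<Rightarrow> real^'n^'n"
    and K :: "real^'n \<Rightarrow> real^'m \<Rightarrow> real^'m^'n"
    and \<epsilon> :: real
  assumes e_deriv: "\<And>x. (e has_derivative (\<lambda>h. E x *v h)) (at x)"
    and E_cont: "continuous_on UNIV E"
    and f_deriv: "\<And>x u. ((\<lambda>(y, w). f y w) has_derivative
                     (\<lambda>(h, k). F x u *v h + K x u *v k)) (at (x, u))"
    and F_cont: "continuous_on UNIV (\<lambda>(x, u). F x u)"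
    and K_cont: "continuous_on UNIV (\<lambda>(x, u). K x u)"
    and eps_pos: "\<epsilon> > 0"
    and E_pd: "\<And>x. pos_def_mat (E x + transpose (E x) - \<epsilon> *\<^sub>R mat 1)"
    and F_nonneg: "\<And>x u. F x u \<ge> 0"
    and K_nonneg: "\<And>x u. K x u \<ge> 0"
    and E_M: "\<And>x. nonsing_M_matrix (E x)"
    and e0: "e 0 = f 0 0"
  shows "positive_model e f"
proof (rule positive_model_if_isotone)
  have E_pos: "\<And>x d. d \<noteq> 0 \<Longrightarrow> (E x *v d) \<bullet> d > 0"
    using quadratic_form_pos_if_pos_def_sym_part[OF less_imp_le[OF eps_pos] E_pd] by blast
  have off: "\<And>x i j. i \<noteq> j \<Longrightarrow> E x $ i $ j \<le> 0"
    using E_M unfolding nonsing_M_matrix_def by blast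
  show "q \<le> p" if "e q \<le> e p" for p q
    using inverse_isotone_if_strictly_monotone_off_diagonally_antitone
      strictly_monotone_if_quadratic_form_pos[OF e_deriv E_pos]
      off_diagonally_antitone_if_off_diagonal_nonpos[OF e_deriv off] that
    by blast
  show "f 0 0 \<le> f x u" if "x \<ge> 0" "u \<ge> 0" for x u
    using isotone_if_jacobians_nonneg[OF f_deriv F_nonneg K_nonneg that] .
qed (fact e0)

end
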